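(* Let $M$ be a finite-horizon reward-free MDP, $\Pi\subseteq\Pi_{\mathrm{RNS}}$, $h\in[H]$, and let $\mu\in\Delta(\mathcal{X}\times\mathcal{A})$ with $C_\infty\equiv C^M_{\infty;h}(\mu)$. Then for all $p\in\Delta(\Pi_{\mathrm{RNS}})$, $$\Psi^M_{h,\varepsilon}(p)\le 2C_\infty\cdot\Psi^M_{\mu;h,\varepsilon}(p).$$ Furthermore, $\mathsf{Cov}^M_{\mu;h,\varepsilon}\le 1$ for all $\varepsilon>0$.
   Context: Episodic reward-free MDP $M$ (countable states $\mathcal{X}$, actions $\mathcal{A}$, horizon $H$); $\Pi_{\mathrm{RNS}}$ randomized non-stationary policies; $d^{M,\pi}_h(x,a)$ the layer-$h$ state-action occupancy of $\pi$, and $d^{M,p}_h=\mathbb{E}_{\pi\sim p}d^{M,\pi}_h$ for mixtures $p$. Definitions: $\Psi^M_{h,\varepsilon}(p)=\sup_{\pi\in\Pi}\mathbb{E}^{M,\pi}\big[\frac{d^{M,\pi}_h(x_h,a_h)}{d^{M,p}_h(x_h,a_h)+\varepsilon d^{M,\pi}_h(x_h,a_h)}\big]$; $C^M_{\infty;h}(\mu)=\sup_{\pi\in\Pi}\sup_{(x,a)}\frac{d^{M,\pi}_h(x,a)}{\mu(x,a)}$; $\Psi^M_{\mu;h,\varepsilon}(p)=\sup_{\pi\in\Pi}\mathbb{E}^{M,\pi}\big[\frac{\mu(x_h,a_h)}{d^{M,p}_h(x_h,a_h)+\varepsilon C_\infty\mu(x_h,a_h)}\big]$ with $C_\infty=C^M_{\infty;h}(\mu)$;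 $\mathsf{Cov}^M_{\mu;h,\varepsilon}=\inf_{p\in\Delta(\Pi)}\Psi^M_{\mu;h,\varepsilon}(p)$. *)

theory Defs
  imports "HOL-Probability.Probability"
begin

text \<open>Layers are numbered 1..H. The initial state x_1 is drawn from mdp_init;
  at layer k, after playing a_k in x_k, the next state is drawn from mdp_trans M k x_k a_k.\<close>
record ('x, 'a) mdp =
  mdp_init  :: "'x pmf"
  mdp_trans :: "nat \<Rightarrow> 'x \<Rightarrow> 'a \<Rightarrow> 'x pmf"
  mdp_horizon :: nat

type_synonym ('x, 'a) policy = "nat \<Rightarrow> 'x \<Rightarrow> 'a pmf"

text \<open>state_dist M pi n is the law of the state at layer n+1 under pi.\<close>
primrec state_dist :: "('x, 'a) mdp \<Rightarrow> ('x, 'a) policy \<Rightarrow> nat \<Rightarrow> 'x pmf" where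
  "state_dist M \<pi> 0 = mdp_init M"
| "state_dist M \<pi> (Suc n) =
     bind_pmf (state_dist M \<pi> n)
       (\<lambda>x. bind_pmf (\<pi> (Suc n) x) (\<lambda>a. mdp_trans M (Suc n) x a))"

text \<open>Law of the layer-h state-action pair (x_h, a_h) under pi (h \<ge> 1).\<close>
definition sa_dist :: "('x, 'a) mdp \<Rightarrow> ('x, 'a) policy \<Rightarrow> nat \<Rightarrow> ('x \<times> 'a) pmf" where
  "sa_dist M \<pi> h = bind_pmf (state_dist M \<pi> (h - 1)) (\<lambda>x. map_pmf (\<lambda>a. (x, a)) (\<pi> h x))"

definition occ :: "('x, 'a) mdp \<Rightarrow> ('x, 'a) policy \<Rightarrow> nat \<Rightarrow> 'x \<times> 'a \<Rightarrow> real" where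
  "occ M \<pi> h xa = pmf (sa_dist M \<pi> h) xa"

definition occ_mix :: "('x, 'a) mdp \<Rightarrow> ('x, 'a) policy pmf \<Rightarrow> nat \<Rightarrow> 'x \<times> 'a \<Rightarrow> real" where
  "occ_mix M p h xa = measure_pmf.expectation p (\<lambda>\<pi>. occ M \<pi> h xa)"

definition expect_h :: "('x, 'a) mdp \<Rightarrow> ('x, 'a) policy \<Rightarrow> nat \<Rightarrow> ('x \<times> 'a \<Rightarrow> real) \<Rightarrow> real" where
  "expect_h M \<pi> h f = measure_pmf.expectation (sa_dist M \<pi> h) f"

definition Psi :: "('x, 'a) mdp \<Rightarrow> ('x, 'a) policy set \<Rightarrow> nat \<Rightarrow> real \<Rightarrow> ('x, 'a) policy pmf \<Rightarrow> real" where
  "Psi M Pol h eps p = (SUP \<pi>\<in>Pol. expect_h M \<pi> h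
      (\<lambda>xa. occ M \<pi> h xa / (occ_mix M p h xa + eps * occ M \<pi> h xa)))"

definition ratio :: "real \<Rightarrow> real \<Rightarrow> ereal" where
  "ratio d m = (if m = 0 then (if d = 0 then 0 else \<infinity>) else ereal (d / m))"

definition Cinf :: "('x, 'a) mdp \<Rightarrow> ('x, 'a) policy set \<Rightarrow> nat \<Rightarrow> ('x \<times> 'a) pmf \<Rightarrow> ereal" where
  "Cinf M Pol h \<mu> = (SUP \<pi>\<in>Pol. SUP xa. ratio (occ M \<pi> h xa) (pmf \<mu> xa))"

text \<open>Psi^M_{mu;h,eps}(p), using C_infty = Cinf M Pi h mu (assumed finite where used).\<close>
definition Psi_mu :: "('x, 'a) mdp \<Rightarrow> ('x, 'a) policy set \<Rightarrow> nat \<Rightarrow> ('x \<times> 'a) pmf \<Rightarrow> real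
    \<Rightarrow> ('x, 'a) policy pmf \<Rightarrow> real" where
  "Psi_mu M Pol h \<mu> eps p = (SUP \<pi>\<in>Pol. expect_h M \<pi> h
      (\<lambda>xa. pmf \<mu> xa / (occ_mix M p h xa + eps * real_of_ereal (Cinf M Pol h \<mu>) * pmf \<mu> xa)))"

definition Cov_mu :: "('x, 'a) mdp \<Rightarrow> ('x, 'a) policy set \<Rightarrow> nat \<Rightarrow> ('x \<times> 'a) pmf \<Rightarrow> real \<Rightarrow> real" where
  "Cov_mu M Pol h \<mu> eps = (INF p\<in>{p. set_pmf p \<subseteq> Pol}. Psi_mu M Pol h \<mu> eps p)"

end

theory Submission
  imports Defs
begin

text \<open>
  The first inequality is pointwise: x / (D + \<epsilon> x) is increasing in x and
  d^\<pi> \<le> C \<mu> (C = C_\<infinity>), so the integrand of \<Psi>(p) is at most C times that of \<Psi>_\<mu>(p).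

  The bound on Cov is a minimax statement, proved without a minimax theorem by maximising
  the concave potential \<Phi>(p) = E_\<mu>[ln (1 + d^p / (\<epsilon> C \<mu>))] over mixtures p of
  policies in \<Pi>; it is bounded by ln (1 + 1/\<epsilon>). Moving a fraction t of the mass of p to
  a policy \<pi> raises \<Phi> by at least t (E_\<mu>[d^\<pi> / (d^p + \<epsilon> C \<mu>)] - 1) - O(t^2), and after
  the change of measure from d^\<pi> to \<mu> that expectation is the integral defining \<Psi>_\<mu>(p)
  at \<pi>. At a near-maximiser p the increment is almost nonpositive for every \<pi>, whence
  \<Psi>_\<mu>(p) \<le> 1 + \<eta> for arbitrarily small \<eta>.
\<close>

definition mix_return_pmf :: "real \<Rightarrow> 'a \<Rightarrow> 'a pmf \<Rightarrow> 'a pmf" where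
  "mix_return_pmf t a p = bind_pmf (bernoulli_pmf t) (\<lambda>b. if b then return_pmf a else p)"

lemma set_pmf_mix_return_pmf_subset:
  "set_pmf (mix_return_pmf t a p) \<subseteq> insert a (set_pmf p)"
  by (auto simp: mix_return_pmf_def split: if_splits)

lemma integral_mix_return_pmf:
  fixes f :: "'a \<Rightarrow> real" and p :: "'a pmf"
  assumes t: "0 \<le> t" "t \<le> 1" and f_nonneg: "\<And>x. 0 \<le> f x" and f_int: "integrable p f"
  shows "(\<integral>x. f x \<partial>mix_return_pmf t a p) = t * f a + (1 - t) * (\<integral>x. f x \<partial>p)"
proof -
  define I where "I = (\<integral>x. f x \<partial>p)"
  have I_nonneg: "0 \<le> I"
    unfolding I_def using f_nonneg by (simp add: integral_nonneg_AE)
  have "(\<integral>\<^sup>+x. f x \<partial>p) = ennreal I"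
    unfolding I_def using f_int f_nonneg by (simp add: nn_integral_eq_integral)
  then have "(\<integral>\<^sup>+x. f x \<partial>mix_return_pmf t a p) = ennreal (t * f a + (1 - t) * I)"
    using t f_nonneg[of a] I_nonneg
    by (simp add: mix_return_pmf_def ennreal_mult ennreal_plus mult.commute)
  moreover have "0 \<le> t * f a + (1 - t) * I"
    using t f_nonneg[of a] I_nonneg by simp
  ultimately show ?thesis
    unfolding I_def[symmetric] by (simp add: integral_eq_nn_integral f_nonneg)
qed

lemma integrable_measure_pmf_nonneg_bounded:
  fixes f :: "'a \<Rightarrow> real" and p :: "'a pmf"
  assumes "\<And>x. x \<in> set_pmf p \<Longrightarrow> 0 \<le> f x" "\<And>x. x \<in> set_pmf p \<Longrightarrow> f x \<le> B"
  shows "integrable (measure_pmf p) f"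
  by (rule measure_pmf.integrable_const_bound[where B=B]) (auto intro!: AE_pmfI simp: assms)

lemma integral_pmf_mult_swap:
  fixes f :: "'k::countable \<Rightarrow> real" and p q :: "'k pmf"
  shows "(\<integral>k. pmf q k * f k \<partial>p) = (\<integral>k. pmf p k * f k \<partial>q)"
  by (simp add: measure_pmf_eq_density integral_density mult.left_commute)

lemma divide_add_mult_self_bounds:
  fixes a D c :: real
  assumes "0 \<le> a" "0 \<le> D" "0 < c"
  shows "0 \<le> a / (D + c * a)" and "a / (D + c * a) \<le> 1 / c"
proof -
  show "0 \<le> a / (D + c * a)"
    using assms by simp
  show "a / (D + c * a) \<le> 1 / c"
  proof (cases "a = 0")
    case False
    then have "a / (D + c * a) \<le> a / (c * a)"
      using assms by (intro divide_left_mono) (auto intro!: mult_pos_pos add_nonneg_pos)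
    then show ?thesis
      using False by simp
  qed (use assms in simp)
qed

lemma divide_add_mult_self_le_scaled:
  fixes d m D e C :: real
  assumes "0 \<le> d" "d \<le> C * m" "0 \<le> D" "0 < e" "0 < C"
  shows "d / (D + e * d) \<le> C * (m / (D + e * C * m))"
proof (cases "d = 0")
  case False
  then have "0 < C * m"
    using assms by linarith
  then have pos: "0 < D + e * d" "0 < D + e * (C * m)"
    using assms False by (simp_all add: add_nonneg_pos)
  have "d * (D + e * (C * m)) \<le> C * m * (D + e * d)"
    using mult_right_mono[OF assms(2,3)] by (simp add: algebra_simps)
  then have "d / (D + e * d) \<le> C * m / (D + e * (C * m))"
    unfolding frac_le_eq[OF pos[THEN less_imp_neq, symmetric]]
    using pos by (intro divide_nonpos_pos) auto
  then show ?thesis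
    by (simp add: mult.assoc)
qed (use assms in \<open>simp add: zero_le_mult_iff\<close>)

lemma ln_one_plus_div_convex_step_ge:
  fixes b D d e t :: real
  assumes b: "0 < b" and D: "0 \<le> D" and d: "0 \<le> d" and gap: "e * \<bar>d - D\<bar> \<le> b"
    and e: "0 < e" and t: "0 \<le> t" "t \<le> 1" "t \<le> e / 2"
  shows "t * (d / (D + b) - 1) - 2 * (t / e)\<^sup>2
           \<le> ln (1 + (t * d + (1 - t) * D) / b) - ln (1 + D / b)"
proof -
  define r where "r = (d - D) / (D + b)"
  have "\<bar>r\<bar> \<le> \<bar>d - D\<bar> / b"
    using b D by (simp add: r_def abs_divide frac_le)
  also have "\<dots> \<le> 1 / e"
    using gap b e by (simp add: field_simps)
  finally have tr_le: "\<bar>t * r\<bar> \<le> t / e"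
    using mult_left_mono[of "\<bar>r\<bar>" "1 / e" t] t by (simp add: abs_mult)
  moreover have half: "t / e \<le> 1 / 2"
    using t e by (simp add: field_simps)
  ultimately have "\<bar>ln (1 + t * r) - t * r\<bar> \<le> 2 * (t * r)\<^sup>2"
    by (intro abs_ln_one_plus_x_minus_x_bound) linarith
  moreover have "(t * r)\<^sup>2 \<le> (t / e)\<^sup>2"
    using tr_le by (metis abs_ge_zero power2_abs power_mono)
  ultimately have ln_ge: "t * r - 2 * (t / e)\<^sup>2 \<le> ln (1 + t * r)"
    by (simp add: abs_le_iff)
  have "0 < D + b"
    using b D by simp
  then have "1 + t * r = (D + b + t * (d - D)) / (D + b)"
    by (simp add: r_def field_simps)
  then have "1 + (t * d + (1 - t) * D) / b = (1 + D / b) * (1 + t * r)"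
    using b \<open>0 < D + b\<close> by (simp add: field_simps)
  moreover have "0 < 1 + D / b" "0 < 1 + t * r"
    using b D tr_le half by (simp_all add: add_pos_nonneg, linarith)
  ultimately have "ln (1 + (t * d + (1 - t) * D) / b) - ln (1 + D / b) = ln (1 + t * r)"
    by (simp add: ln_mult)
  moreover have "d / (D + b) - 1 \<le> r"
    using b D by (simp add: r_def diff_divide_distrib)
  ultimately show ?thesis
    using ln_ge t by (smt (verit) mult_left_mono)
qed

text \<open>\<mu> is the reference distribution, d \<pi> the occupancy of \<pi> and C the constant C_\<infinity>;
  mixture p is d^p and coverage e p \<pi> is the integral defining \<Psi>_\<mu>(p) at \<pi>, taken against \<mu>.\<close>

locale dominated_family =
  fixes \<mu> :: "'k pmf" and C :: real and d :: "'p \<Rightarrow> 'k \<Rightarrow> real" and P :: "'p set"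
  assumes P_nonempty: "P \<noteq> {}"
    and C_pos: "0 < C"
    and d_nonneg: "\<And>\<pi> k. 0 \<le> d \<pi> k"
    and d_dominated: "\<And>\<pi> k. \<pi> \<in> P \<Longrightarrow> d \<pi> k \<le> C * pmf \<mu> k"
begin

definition mixture :: "'p pmf \<Rightarrow> 'k \<Rightarrow> real" where
  "mixture p k = (\<integral>\<pi>. d \<pi> k \<partial>p)"

definition coverage :: "real \<Rightarrow> 'p pmf \<Rightarrow> 'p \<Rightarrow> real" where
  "coverage e p \<pi> = (\<integral>k. d \<pi> k / (mixture p k + e * C * pmf \<mu> k) \<partial>\<mu>)"

definition potential :: "real \<Rightarrow> 'p pmf \<Rightarrow> real" where
  "potential e p = (\<integral>k. ln (1 + mixture p k / (e * C * pmf \<mu> k)) \<partial>\<mu>)"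

lemma mixture_nonneg: "0 \<le> mixture p k"
  unfolding mixture_def by (simp add: d_nonneg)

lemma integrable_d:
  assumes "set_pmf p \<subseteq> P"
  shows "integrable p (\<lambda>\<pi>. d \<pi> k)"
  by (rule integrable_measure_pmf_nonneg_bounded[where B = "C * pmf \<mu> k"])
     (use assms d_nonneg d_dominated in auto)

lemma mixture_le:
  assumes "set_pmf p \<subseteq> P"
  shows "mixture p k \<le> C * pmf \<mu> k"
  unfolding mixture_def
  by (rule measure_pmf.integral_le_const[OF integrable_d[OF assms]])
     (use assms in \<open>auto intro!: AE_pmfI d_dominated\<close>)

lemma mixture_mix_return_pmf:
  assumes "set_pmf p \<subseteq> P" "0 \<le> t" "t \<le> 1"
  shows "mixture (mix_return_pmf t \<pi> p) k
           = t * d \<pi> k + (1 - t) * mixture p k"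
  unfolding mixture_def using assms by (intro integral_mix_return_pmf integrable_d d_nonneg)

lemma coverage_integrand_bounds:
  assumes "\<pi> \<in> P" "0 < e"
  shows "0 \<le> d \<pi> k / (mixture p k + e * C * pmf \<mu> k)"
    and "d \<pi> k / (mixture p k + e * C * pmf \<mu> k) \<le> 1 / e"
proof -
  have "0 \<le> C * pmf \<mu> k"
    using C_pos by simp
  then show "0 \<le> d \<pi> k / (mixture p k + e * C * pmf \<mu> k)"
    using assms d_nonneg mixture_nonneg by (simp add: mult.assoc)
  have "d \<pi> k / (mixture p k + e * (C * pmf \<mu> k)) \<le> C * pmf \<mu> k / (mixture p k + e * (C * pmf \<mu> k))"
    using assms d_dominated mixture_nonneg \<open>0 \<le> C * pmf \<mu> k\<close> by (intro divide_right_mono) auto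
  also have "\<dots> \<le> 1 / e"
    using assms mixture_nonneg \<open>0 \<le> C * pmf \<mu> k\<close> by (intro divide_add_mult_self_bounds(2)) auto
  finally show "d \<pi> k / (mixture p k + e * C * pmf \<mu> k) \<le> 1 / e"
    by (simp add: mult.assoc)
qed

lemma integrable_coverage:
  assumes "\<pi> \<in> P" "0 < e"
  shows "integrable \<mu> (\<lambda>k. d \<pi> k / (mixture p k + e * C * pmf \<mu> k))"
  by (rule integrable_measure_pmf_nonneg_bounded[where B = "1 / e"])
     (use coverage_integrand_bounds[OF assms] in auto)

lemma coverage_nonneg:
  assumes "\<pi> \<in> P" "0 < e"
  shows "0 \<le> coverage e p \<pi>"
  unfolding coverage_def using coverage_integrand_bounds(1)[OF assms] by simp

lemma coverage_le:
  assumes "\<pi> \<in> P" "0 < e"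
  shows "coverage e p \<pi> \<le> 1 / e"
  unfolding coverage_def
  by (rule measure_pmf.integral_le_const[OF integrable_coverage[OF assms]])
     (use coverage_integrand_bounds(2)[OF assms] in auto)

lemma bdd_above_coverage:
  assumes "0 < e"
  shows "bdd_above (coverage e p ` P)"
  using coverage_le[OF _ assms] by (auto intro!: bdd_aboveI)

lemma SUP_coverage_nonneg:
  assumes "0 < e"
  shows "0 \<le> (SUP \<pi>\<in>P. coverage e p \<pi>)"
proof -
  obtain \<pi> where "\<pi> \<in> P"
    using P_nonempty by auto
  then show ?thesis
    using coverage_nonneg[OF _ assms] bdd_above_coverage[OF assms] by (intro cSUP_upper2) auto
qed

lemma potential_integrand_bounds:
  assumes "set_pmf p \<subseteq> P" "0 < e" "k \<in> set_pmf \<mu>"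
  shows "0 \<le> ln (1 + mixture p k / (e * C * pmf \<mu> k))"
    and "ln (1 + mixture p k / (e * C * pmf \<mu> k)) \<le> ln (1 + 1 / e)"
proof -
  have pos: "0 < e * C * pmf \<mu> k"
    using assms C_pos by (simp add: pmf_positive)
  then have nonneg: "0 \<le> mixture p k / (e * C * pmf \<mu> k)"
    using mixture_nonneg[of p k] by simp
  then show "0 \<le> ln (1 + mixture p k / (e * C * pmf \<mu> k))"
    by simp
  have "mixture p k / (e * C * pmf \<mu> k) \<le> C * pmf \<mu> k / (e * C * pmf \<mu> k)"
    using mixture_le[OF assms(1)] pos by (intro divide_right_mono) auto
  also have "\<dots> = 1 / e"
    using assms C_pos pmf_positive[OF assms(3)] by simp
  finally show "ln (1 + mixture p k / (e * C * pmf \<mu> k)) \<le> ln (1 + 1 / e)"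
    using nonneg assms(2) by (subst ln_le_cancel_iff) auto
qed

lemma integrable_potential:
  assumes "set_pmf p \<subseteq> P" "0 < e"
  shows "integrable \<mu> (\<lambda>k. ln (1 + mixture p k / (e * C * pmf \<mu> k)))"
  by (rule integrable_measure_pmf_nonneg_bounded[where B = "ln (1 + 1 / e)"])
     (use potential_integrand_bounds[OF assms] in auto)

lemma potential_le:
  assumes "set_pmf p \<subseteq> P" "0 < e"
  shows "potential e p \<le> ln (1 + 1 / e)"
  unfolding potential_def
  by (rule measure_pmf.integral_le_const[OF integrable_potential[OF assms]])
     (use potential_integrand_bounds(2)[OF assms] in \<open>auto intro: AE_pmfI\<close>)

lemma potential_mix_return_pmf_ge:
  assumes p: "set_pmf p \<subseteq> P" and \<pi>: "\<pi> \<in> P" and e: "0 < e"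
    and t: "0 \<le> t" "t \<le> 1" "t \<le> e / 2"
  shows "t * (coverage e p \<pi> - 1) - 2 * (t / e)\<^sup>2
           \<le> potential e (mix_return_pmf t \<pi> p)
              - potential e p"
proof -
  define q where "q = mix_return_pmf t \<pi> p"
  have q: "set_pmf q \<subseteq> P"
    using set_pmf_mix_return_pmf_subset[of t \<pi> p] p \<pi> unfolding q_def by blast
  have pointwise: "t * (d \<pi> k / (mixture p k + e * C * pmf \<mu> k) - 1) - 2 * (t / e)\<^sup>2
      \<le> ln (1 + mixture q k / (e * C * pmf \<mu> k)) - ln (1 + mixture p k / (e * C * pmf \<mu> k))"
    if "k \<in> set_pmf \<mu>" for k
  proof -
    have "\<bar>d \<pi> k - mixture p k\<bar> \<le> C * pmf \<mu> k"
      unfolding abs_le_iff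
      using d_nonneg[of \<pi> k] d_dominated[OF \<pi>, of k] mixture_nonneg[of p k] mixture_le[OF p, of k]
      by linarith
    then have "e * \<bar>d \<pi> k - mixture p k\<bar> \<le> e * C * pmf \<mu> k"
      using e by (simp add: mult.assoc)
    moreover have "0 < e * C * pmf \<mu> k"
      using that e C_pos by (simp add: pmf_positive)
    ultimately have "t * (d \<pi> k / (mixture p k + e * C * pmf \<mu> k) - 1) - 2 * (t / e)\<^sup>2
        \<le> ln (1 + (t * d \<pi> k + (1 - t) * mixture p k) / (e * C * pmf \<mu> k))
           - ln (1 + mixture p k / (e * C * pmf \<mu> k))"
      using mixture_nonneg d_nonneg e t by (intro ln_one_plus_div_convex_step_ge) auto
    then show ?thesis
      unfolding q_def mixture_mix_return_pmf[OF p t(1,2)] .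
  qed
  define g where "g k = d \<pi> k / (mixture p k + e * C * pmf \<mu> k)" for k
  have "integrable \<mu> g"
    unfolding g_def by (rule integrable_coverage[OF \<pi> e])
  then have "t * (coverage e p \<pi> - 1) - 2 * (t / e)\<^sup>2 = (\<integral>k. t * (g k - 1) - 2 * (t / e)\<^sup>2 \<partial>\<mu>)"
    by (simp add: coverage_def g_def[symmetric] right_diff_distrib)
  also have "\<dots> \<le> (\<integral>k. ln (1 + mixture q k / (e * C * pmf \<mu> k)) - ln (1 + mixture p k / (e * C * pmf \<mu> k)) \<partial>\<mu>)"
  proof (rule integral_mono_AE)
    show "integrable \<mu> (\<lambda>k. t * (g k - 1) - 2 * (t / e)\<^sup>2)"
      using \<open>integrable \<mu> g\<close> by simp
    show "integrable \<mu> (\<lambda>k. ln (1 + mixture q k / (e * C * pmf \<mu> k)) - ln (1 + mixture p k / (e * C * pmf \<mu> k)))"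
      using integrable_potential[OF q e] integrable_potential[OF p e] by simp
  qed (use pointwise in \<open>auto intro: AE_pmfI simp: g_def\<close>)
  also have "\<dots> = potential e q - potential e p"
    using integrable_potential[OF q e] integrable_potential[OF p e] by (simp add: potential_def)
  finally show ?thesis
    unfolding q_def .
qed

lemma exists_mixture_coverage_le:
  assumes e: "0 < e" and \<eta>: "0 < \<eta>"
  shows "\<exists>p. set_pmf p \<subseteq> P \<and> (\<forall>\<pi>\<in>P. coverage e p \<pi> \<le> 1 + \<eta>)"
proof -
  define S where "S = {p. set_pmf p \<subseteq> P}"
  obtain \<pi>\<^sub>0 where "\<pi>\<^sub>0 \<in> P"
    using P_nonempty by auto
  then have "return_pmf \<pi>\<^sub>0 \<in> S"
    by (simp add: S_def)
  then have S_nonempty: "S \<noteq> {}"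
    by auto
  have bdd: "bdd_above (potential e ` S)"
    using potential_le[OF _ e] by (auto simp: S_def intro!: bdd_aboveI)
  define t where "t = min 1 (min (e / 2) (\<eta> * e\<^sup>2 / 4))"
  have t: "0 < t" "t \<le> 1" "t \<le> e / 2" "t \<le> \<eta> * e\<^sup>2 / 4"
    using e \<eta> by (simp_all add: t_def)
  then have "(SUP q\<in>S. potential e q) - t * \<eta> / 2 < (SUP q\<in>S. potential e q)"
    using \<eta> by simp
  then have "\<exists>p\<in>S. (SUP q\<in>S. potential e q) - t * \<eta> / 2 < potential e p"
    by (simp only: less_cSUP_iff[OF S_nonempty bdd])
  then obtain p where p: "set_pmf p \<subseteq> P"
    and near_max: "(SUP q\<in>S. potential e q) - t * \<eta> / 2 < potential e p"
    by (auto simp: S_def)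
  have "coverage e p \<pi> \<le> 1 + \<eta>" if \<pi>: "\<pi> \<in> P" for \<pi>
  proof -
    define q where "q = mix_return_pmf t \<pi> p"
    have "q \<in> S"
      using set_pmf_mix_return_pmf_subset[of t \<pi> p] p \<pi> unfolding q_def S_def by blast
    then have "potential e q \<le> (SUP q\<in>S. potential e q)"
      using bdd by (rule cSUP_upper)
    then have increment: "t * (coverage e p \<pi> - 1) - 2 * (t / e)\<^sup>2 < t * \<eta> / 2"
      using potential_mix_return_pmf_ge[OF p \<pi> e less_imp_le[OF t(1)] t(2,3)] near_max
      unfolding q_def by linarith
    have "2 * (t / e)\<^sup>2 = t * (2 * t / e\<^sup>2)"
      by (simp add: power2_eq_square)
    also have "\<dots> \<le> t * (\<eta> / 2)"
      using t(1,4) e by (intro mult_left_mono) (simp_all add: field_simps)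
    finally have "2 * (t / e)\<^sup>2 \<le> t * \<eta> / 2"
      by simp
    with increment have "t * (coverage e p \<pi> - 1) < t * \<eta>"
      by linarith
    then show ?thesis
      using t(1) by simp
  qed
  then show ?thesis
    using p by blast
qed

lemma INF_SUP_coverage_le_1:
  assumes e: "0 < e"
  shows "(INF p\<in>{p. set_pmf p \<subseteq> P}. SUP \<pi>\<in>P. coverage e p \<pi>) \<le> 1"
proof (rule field_le_epsilon)
  fix \<eta> :: real
  assume "0 < \<eta>"
  then obtain p where p: "set_pmf p \<subseteq> P" and cov: "\<forall>\<pi>\<in>P. coverage e p \<pi> \<le> 1 + \<eta>"
    using exists_mixture_coverage_le[OF e] by blast
  have "(INF p\<in>{p. set_pmf p \<subseteq> P}. SUP \<pi>\<in>P. coverage e p \<pi>) \<le> (SUP \<pi>\<in>P. coverage e p \<pi>)"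
    using p SUP_coverage_nonneg[OF e] by (intro cINF_lower) (auto intro!: bdd_belowI)
  also have "\<dots> \<le> 1 + \<eta>"
    using cov P_nonempty by (intro cSUP_least) auto
  finally show "(INF p\<in>{p. set_pmf p \<subseteq> P}. SUP \<pi>\<in>P. coverage e p \<pi>) \<le> 1 + \<eta>" .
qed

end

lemma occ_nonneg: "0 \<le> occ M \<pi> h k"
  by (simp add: occ_def)

lemma occ_mix_nonneg: "0 \<le> occ_mix M p h k"
  unfolding occ_mix_def by (simp add: occ_nonneg)

lemma occ_le_Cinf_mult_pmf:
  assumes \<pi>: "\<pi> \<in> Pol" and finite: "Cinf M Pol h \<mu> < \<infinity>"
  shows "occ M \<pi> h k \<le> real_of_ereal (Cinf M Pol h \<mu>) * pmf \<mu> k"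
proof -
  have ratio_le: "ratio (occ M \<pi> h k) (pmf \<mu> k) \<le> Cinf M Pol h \<mu>"
    unfolding Cinf_def by (rule SUP_upper2[OF \<pi>]) (rule SUP_upper, simp)
  show ?thesis
  proof (cases "pmf \<mu> k = 0")
    case True
    then have "occ M \<pi> h k = 0"
      using ratio_le finite by (auto simp: ratio_def split: if_splits)
    then show ?thesis
      using True by simp
  next
    case False
    then have "ereal (occ M \<pi> h k / pmf \<mu> k) \<le> Cinf M Pol h \<mu>"
      using ratio_le by (simp add: ratio_def)
    then have "occ M \<pi> h k / pmf \<mu> k \<le> real_of_ereal (Cinf M Pol h \<mu>)"
      using finite by (cases "Cinf M Pol h \<mu>") auto
    then show ?thesis
      using False by (simp add: pos_divide_le_eq order_less_le)
  qed
qed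

lemma Cinf_pos:
  assumes "Pol \<noteq> {}" "Cinf M Pol h \<mu> < \<infinity>"
  shows "0 < real_of_ereal (Cinf M Pol h \<mu>)"
proof -
  obtain \<pi> where \<pi>: "\<pi> \<in> Pol"
    using assms(1) by auto
  obtain k where "k \<in> set_pmf (sa_dist M \<pi> h)"
    using set_pmf_not_empty by fast
  then have "0 < occ M \<pi> h k"
    by (simp add: occ_def pmf_positive)
  then have "0 < real_of_ereal (Cinf M Pol h \<mu>) * pmf \<mu> k"
    using occ_le_Cinf_mult_pmf[OF \<pi> assms(2), of k] by linarith
  then show ?thesis
    by (simp add: zero_less_mult_iff)
qed

lemma dominated_family_occ:
  assumes "Pol \<noteq> {}" "Cinf M Pol h \<mu> < \<infinity>"
  shows "dominated_family \<mu> (real_of_ereal (Cinf M Pol h \<mu>)) (\<lambda>\<pi>. occ M \<pi> h) Pol"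
  using assms by unfold_locales (auto intro: Cinf_pos occ_nonneg occ_le_Cinf_mult_pmf)

lemma expect_h_pmf_mult:
  fixes M :: "('x::countable, 'a::countable) mdp"
  shows "expect_h M \<pi> h (\<lambda>k. pmf \<mu> k * f k) = (\<integral>k. occ M \<pi> h k * f k \<partial>\<mu>)"
  unfolding expect_h_def occ_def by (rule integral_pmf_mult_swap)

context
  fixes M :: "('x::countable, 'a::countable) mdp" and Pol :: "('x, 'a) policy set"
    and h :: nat and \<mu> :: "('x \<times> 'a) pmf"
  assumes Pol_nonempty: "Pol \<noteq> {}" and Cinf_finite: "Cinf M Pol h \<mu> < \<infinity>"
begin

interpretation occ_family: dominated_family \<mu> "real_of_ereal (Cinf M Pol h \<mu>)" "\<lambda>\<pi>. occ M \<pi> h" Pol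
  using Pol_nonempty Cinf_finite by (rule dominated_family_occ)

lemma expect_h_eq_coverage:
  "expect_h M \<pi> h (\<lambda>k. pmf \<mu> k / (occ_mix M p h k + e * real_of_ereal (Cinf M Pol h \<mu>) * pmf \<mu> k))
     = occ_family.coverage e p \<pi>"
  using expect_h_pmf_mult[of M \<pi> h \<mu> "\<lambda>k. 1 / (occ_mix M p h k + e * real_of_ereal (Cinf M Pol h \<mu>) * pmf \<mu> k)"]
  by (simp add: occ_family.coverage_def occ_family.mixture_def occ_mix_def)

lemma Psi_mu_eq_SUP_coverage:
  "Psi_mu M Pol h \<mu> e p = (SUP \<pi>\<in>Pol. occ_family.coverage e p \<pi>)"
  unfolding Psi_mu_def expect_h_eq_coverage ..

lemma Psi_mu_nonneg:
  assumes "0 < e"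
  shows "0 \<le> Psi_mu M Pol h \<mu> e p"
  unfolding Psi_mu_eq_SUP_coverage using assms by (rule occ_family.SUP_coverage_nonneg)

lemma Psi_le_Cinf_mult_Psi_mu:
  assumes e: "0 < e"
  shows "Psi M Pol h e p \<le> real_of_ereal (Cinf M Pol h \<mu>) * Psi_mu M Pol h \<mu> e p"
  unfolding Psi_def
proof (rule cSUP_least[OF Pol_nonempty])
  fix \<pi>
  assume \<pi>: "\<pi> \<in> Pol"
  let ?C = "real_of_ereal (Cinf M Pol h \<mu>)"
  have "expect_h M \<pi> h (\<lambda>k. occ M \<pi> h k / (occ_mix M p h k + e * occ M \<pi> h k))
      \<le> expect_h M \<pi> h (\<lambda>k. ?C * (pmf \<mu> k / (occ_mix M p h k + e * ?C * pmf \<mu> k)))"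
    unfolding expect_h_def
  proof (rule integral_mono)
    show "integrable (sa_dist M \<pi> h) (\<lambda>k. occ M \<pi> h k / (occ_mix M p h k + e * occ M \<pi> h k))"
      by (rule integrable_measure_pmf_nonneg_bounded[where B = "1 / e"])
         (use divide_add_mult_self_bounds[OF occ_nonneg occ_mix_nonneg e] in auto)
    have "integrable (sa_dist M \<pi> h) (\<lambda>k. pmf \<mu> k / (occ_mix M p h k + (e * ?C) * pmf \<mu> k))"
      by (rule integrable_measure_pmf_nonneg_bounded[where B = "1 / (e * ?C)"])
         (use divide_add_mult_self_bounds[OF pmf_nonneg occ_mix_nonneg mult_pos_pos[OF e occ_family.C_pos]] in auto)
    then show "integrable (sa_dist M \<pi> h) (\<lambda>k. ?C * (pmf \<mu> k / (occ_mix M p h k + e * ?C * pmf \<mu> k)))"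
      by (rule integrable_mult_right)
    show "occ M \<pi> h k / (occ_mix M p h k + e * occ M \<pi> h k)
        \<le> ?C * (pmf \<mu> k / (occ_mix M p h k + e * ?C * pmf \<mu> k))" for k
      using occ_nonneg occ_le_Cinf_mult_pmf[OF \<pi> Cinf_finite] occ_mix_nonneg e occ_family.C_pos
      by (rule divide_add_mult_self_le_scaled)
  qed
  also have "\<dots> = ?C * occ_family.coverage e p \<pi>"
    unfolding expect_h_eq_coverage[symmetric] expect_h_def by (rule integral_mult_right_zero)
  also have "\<dots> \<le> ?C * Psi_mu M Pol h \<mu> e p"
    unfolding Psi_mu_eq_SUP_coverage using \<pi> occ_family.bdd_above_coverage[OF e] occ_family.C_pos
    by (intro mult_left_mono cSUP_upper) auto
  finally show "expect_h M \<pi> h (\<lambda>k. occ M \<pi> h k / (occ_mix M p h k + e * occ M \<pi> h k))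
      \<le> ?C * Psi_mu M Pol h \<mu> e p" .
qed

end

theorem proposition4p1:
  fixes M :: "('x::countable, 'a::countable) mdp"
    and Pol :: "('x, 'a) policy set"
    and h :: nat
    and \<mu> :: "('x \<times> 'a) pmf"
  assumes "Pol \<noteq> {}"
    and "h \<in> {1..mdp_horizon M}"
    and "Cinf M Pol h \<mu> < \<infinity>"
  shows "(\<forall>eps>0. \<forall>p :: ('x, 'a) policy pmf.
            Psi M Pol h eps p \<le> 2 * real_of_ereal (Cinf M Pol h \<mu>) * Psi_mu M Pol h \<mu> eps p)
       \<and> (\<forall>eps>0. Cov_mu M Pol h \<mu> eps \<le> 1)"
proof -
  interpret occ_family: dominated_family \<mu> "real_of_ereal (Cinf M Pol h \<mu>)" "\<lambda>\<pi>. occ M \<pi> h" Pol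
    using assms(1,3) by (rule dominated_family_occ)
  have "Psi M Pol h eps p \<le> 2 * real_of_ereal (Cinf M Pol h \<mu>) * Psi_mu M Pol h \<mu> eps p"
    if "0 < eps" for eps p
  proof -
    have "Psi M Pol h eps p \<le> real_of_ereal (Cinf M Pol h \<mu>) * Psi_mu M Pol h \<mu> eps p"
      by (rule Psi_le_Cinf_mult_Psi_mu[OF assms(1,3) that])
    also have "\<dots> \<le> 2 * real_of_ereal (Cinf M Pol h \<mu>) * Psi_mu M Pol h \<mu> eps p"
      using Cinf_pos[OF assms(1,3)] Psi_mu_nonneg[OF assms(1,3) that] by (intro mult_right_mono) auto
    finally show ?thesis .
  qed
  moreover have "Cov_mu M Pol h \<mu> eps \<le> 1" if "0 < eps" for eps
    using occ_family.INF_SUP_coverage_le_1[OF that]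
    unfolding Cov_mu_def Psi_mu_eq_SUP_coverage[OF assms(1,3)] .
  ultimately show ?thesis
    by blast
qed

end
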